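(* Let $k$ be an algebraically closed field, let $A$ be a local Noetherian $k$-algebra with maximal ideal $\mathfrak{m}$ and residue field $k$, and let $M$ be a finitely generated $A$-module. Then the equalities $$\dim_k (M \otimes_A A/I_n) = n \,\dim_k (M \otimes_A k)$$ hold for all integers $n > 0$ and all ideals $I_n \subset A$ of colength $n$ if and only if the equalities $$\dim_k (M \otimes_A A/\mathfrak{m}^n) = \dim_k (A/\mathfrak{m}^n)\cdot \dim_k (M \otimes_A k)$$ hold for all integers $n > 0$.
   Context: An ideal $I \subset A$ is said to be of colength $n$ if $A/I$ is an Artinian $k$-algebra with $\dim_k A/I = n$. *)

theory Defs
  imports "HOL-Computational_Algebra.Polynomial"
begin

definition algebraically_closed :: "'k::field itself \<Rightarrow> bool" where
  "algebraically_closed _ \<longleftrightarrow> (\<forall>p :: 'k poly. degree p > 0 \<longrightarrow> (\<exists>x. poly p x = 0))"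

definition ring_ideal :: "'a::comm_ring_1 set \<Rightarrow> bool" where
  "ring_ideal I \<longleftrightarrow> module.subspace ((*) :: 'a \<Rightarrow> 'a \<Rightarrow> 'a) I"

definition maximal_ideal :: "'a::comm_ring_1 set \<Rightarrow> bool" where
  "maximal_ideal m \<longleftrightarrow> ring_ideal m \<and> m \<noteq> UNIV \<and>
     (\<forall>J. ring_ideal J \<and> m \<subseteq> J \<longrightarrow> J = m \<or> J = UNIV)"

definition local_ring_with_max :: "'a::comm_ring_1 set \<Rightarrow> bool" where
  "local_ring_with_max m \<longleftrightarrow> maximal_ideal m \<and> (\<forall>J. maximal_ideal J \<longrightarrow> J = m)"

definition noetherian_ring :: "'a::comm_ring_1 itself \<Rightarrow> bool" where
  "noetherian_ring _ \<longleftrightarrow> (\<forall>I :: 'a set. ring_ideal I \<longrightarrow>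
     (\<exists>S. finite S \<and> I = module.span ((*) :: 'a \<Rightarrow> 'a \<Rightarrow> 'a) S))"

text \<open>phi : k \<rightarrow> A is the structure map making A a k-algebra.\<close>
definition ring_hom_fun :: "('k::field \<Rightarrow> 'a::comm_ring_1) \<Rightarrow> bool" where
  "ring_hom_fun phi \<longleftrightarrow> phi 1 = 1 \<and> (\<forall>x y. phi (x + y) = phi x + phi y) \<and>
     (\<forall>x y. phi (x * y) = phi x * phi y)"

text \<open>Residue field k: the composite k \<rightarrow> A \<rightarrow> A/m is surjective (it is automatically
  injective since k is a field and 1 is not in m).\<close>
definition residue_field_is :: "('k::field \<Rightarrow> 'a::comm_ring_1) \<Rightarrow> 'a set \<Rightarrow> bool" where
  "residue_field_is phi m \<longleftrightarrow> (\<forall>a. \<exists>c. a - phi c \<in> m)"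

definition ideal_pow :: "'a::comm_ring_1 set \<Rightarrow> nat \<Rightarrow> 'a set" where
  "ideal_pow m n = module.span ((*) :: 'a \<Rightarrow> 'a \<Rightarrow> 'a)
      {prod_list xs | xs. length xs = n \<and> set xs \<subseteq> m}"

definition ideal_times_mod :: "('a::comm_ring_1 \<Rightarrow> 'm::ab_group_add \<Rightarrow> 'm) \<Rightarrow> 'a set \<Rightarrow> 'm set" where
  "ideal_times_mod sm I = module.span sm {sm a x | a x. a \<in> I}"

definition finitely_generated_mod :: "('a::comm_ring_1 \<Rightarrow> 'm::ab_group_add \<Rightarrow> 'm) \<Rightarrow> bool" where
  "finitely_generated_mod sm \<longleftrightarrow> (\<exists>S. finite S \<and> module.span sm S = UNIV)"

text \<open>Finite dimensionality and dimension of the k-vector space V/N, where V is the whole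
  type with k-scalar multiplication sc and N a subspace: dim = least number of vectors
  spanning V modulo N.  (Convention: 0 if infinite-dimensional.)\<close>
definition fin_quot_dim :: "('k::field \<Rightarrow> 'v::ab_group_add \<Rightarrow> 'v) \<Rightarrow> 'v set \<Rightarrow> bool" where
  "fin_quot_dim sc N \<longleftrightarrow> (\<exists>B. finite B \<and> module.span sc (B \<union> N) = UNIV)"

definition quot_dim :: "('k::field \<Rightarrow> 'v::ab_group_add \<Rightarrow> 'v) \<Rightarrow> 'v set \<Rightarrow> nat" where
  "quot_dim sc N = (if fin_quot_dim sc N
      then (LEAST n. \<exists>B. finite B \<and> card B = n \<and> module.span sc (B \<union> N) = UNIV) else 0)"

text \<open>dim_k (M \<otimes>_A A/I) is computed as dim_k (M / I M).\<close>
definition dim_tensor_quot ::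
  "('k::field \<Rightarrow> 'a::comm_ring_1) \<Rightarrow> ('a \<Rightarrow> 'm::ab_group_add \<Rightarrow> 'm) \<Rightarrow> 'a set \<Rightarrow> nat" where
  "dim_tensor_quot phi sm I = quot_dim (\<lambda>c x. sm (phi c) x) (ideal_times_mod sm I)"

definition dim_ring_quot :: "('k::field \<Rightarrow> 'a::comm_ring_1) \<Rightarrow> 'a set \<Rightarrow> nat" where
  "dim_ring_quot phi I = quot_dim (\<lambda>c a. phi c * a) I"

text \<open>I has colength n: A/I is Artinian (automatic for finite k-dimension) of k-dimension n.\<close>
definition colength :: "('k::field \<Rightarrow> 'a::comm_ring_1) \<Rightarrow> 'a set \<Rightarrow> nat \<Rightarrow> bool" where
  "colength phi I n \<longleftrightarrow> ring_ideal I \<and> fin_quot_dim (\<lambda>c a. phi c * a) I \<and> dim_ring_quot phi I = n"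

end

theory Submission
  imports Defs
begin

text \<open>Taking I = m^n, which has colength dim_k(A/m^n) > 0, gives one direction.
  Conversely, let X be a minimal system of generators of M modulo m M, so that
  |X| = dim_k(M \<otimes> k). An ideal I of finite colength contains some power m^N: every a in m
  satisfies a polynomial relation modulo I whose lowest nonzero coefficient is a unit, and m is
  finitely generated. The set X still generates M modulo m^N M, and the hypothesis
  dim_k(M/m^N M) = dim_k(A/m^N) |X| forces M/m^N M to be free over A/m^N with basis X. This
  freeness descends to M/IM over A/I, whence dim_k(M/IM) = n |X|.\<close>

section \<open>Dimension modulo a subspace\<close>

definition independent_mod ::
  "('k::field \<Rightarrow> 'v::ab_group_add \<Rightarrow> 'v) \<Rightarrow> 'v set \<Rightarrow> ('i \<Rightarrow> 'v) \<Rightarrow> 'i set \<Rightarrow> bool" where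
  "independent_mod sc N f F \<longleftrightarrow> (\<forall>c. (\<Sum>i\<in>F. sc (c i) (f i)) \<in> N \<longrightarrow> (\<forall>i\<in>F. c i = 0))"

context vector_space
begin

lemma span_Un_subspaceE:
  assumes "subspace N" "v \<in> span (B \<union> N)"
  obtains w where "w \<in> span B" "v - w \<in> N"
proof -
  from assms(2) obtain x y where "v = x + y" "x \<in> span B" "y \<in> span N"
    unfolding span_Un by blast
  moreover have "span N = N" using assms(1) by simp
  ultimately show ?thesis using that[of x] by simp
qed

lemma ex_coeffs_mod_subspace:
  assumes "subspace N" "finite B" "span (B \<union> N) = UNIV"
  shows "\<exists>c. v - (\<Sum>b\<in>B. c b *s b) \<in> N"
proof -
  obtain w where "w \<in> span B" "v - w \<in> N" using span_Un_subspaceE assms by blast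
  then show ?thesis unfolding span_finite[OF assms(2)] by auto
qed

lemma quot_dim_le_card:
  assumes "finite B" "span (B \<union> N) = UNIV"
  shows "quot_dim scale N \<le> card B"
proof -
  have "fin_quot_dim scale N" using assms unfolding fin_quot_dim_def by blast
  then show ?thesis unfolding quot_dim_def
    by simp (rule Least_le, use assms in blast)
qed

lemma quot_dim_attained:
  assumes "fin_quot_dim scale N"
  obtains B where "finite B" "card B = quot_dim scale N" "span (B \<union> N) = UNIV"
proof -
  from assms obtain B where "finite B" "span (B \<union> N) = UNIV" unfolding fin_quot_dim_def by blast
  then have "\<exists>n B. finite B \<and> card B = n \<and> span (B \<union> N) = UNIV" by blast
  from LeastI_ex[OF this] show ?thesis using that assms unfolding quot_dim_def by auto
qed

lemma independent_mod_card_le: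
  assumes N: "subspace N" and B: "finite B" "span (B \<union> N) = UNIV"
    and F: "finite F" and ind: "independent_mod scale N f F"
  shows "card F \<le> card B"
proof -
  have "\<forall>i\<in>F. \<exists>w\<in>span B. f i - w \<in> N"
    using span_Un_subspaceE[OF N] B(2) by (metis UNIV_I)
  then obtain w where w: "\<And>i. i \<in> F \<Longrightarrow> w i \<in> span B \<and> f i - w i \<in> N"
    by metis
  have inj: "inj_on w F"
  proof (rule inj_onI, rule ccontr)
    fix i j assume ij: "i \<in> F" "j \<in> F" "w i = w j" "i \<noteq> j"
    define c where "c = (\<lambda>l. if l = i then (1::'a) else if l = j then -1 else 0)"
    have pt: "c l *s f l = (if l = i then f i else 0) - (if l = j then f j else 0)" for l
      using ij(4) by (auto simp: c_def)
    have "(\<Sum>l\<in>F. c l *s f l) = f i - f j"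
      unfolding pt sum_subtractf using ij F by (simp add: sum.delta)
    also have "\<dots> = (f i - w i) - (f j - w j)" using ij(3) by simp
    also have "\<dots> \<in> N" by (rule subspace_diff[OF N]) (use w[of i] w[of j] ij(1,2) in auto)
    finally have "c i = 0" using ind ij unfolding independent_mod_def by blast
    then show False by (simp add: c_def)
  qed
  have "independent (w ` F)"
  proof
    assume "dependent (w ` F)"
    then obtain u v where uv: "v \<in> w ` F" "u v \<noteq> 0" "(\<Sum>v\<in>w ` F. u v *s v) = 0"
      using dependent_finite[of "w ` F"] F by auto
    have s0: "(\<Sum>i\<in>F. u (w i) *s w i) = 0"
      using uv(3) by (simp add: sum.reindex[OF inj])
    have "(\<Sum>i\<in>F. u (w i) *s f i) = (\<Sum>i\<in>F. u (w i) *s w i) + (\<Sum>i\<in>F. u (w i) *s (f i - w i))"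
      by (simp add: sum.distrib[symmetric] scale_right_diff_distrib)
    also have "\<dots> \<in> N" unfolding s0 using w N
      by (auto intro!: subspace_sum subspace_scale)
    finally have "\<forall>i\<in>F. u (w i) = 0"
      using ind[unfolded independent_mod_def, THEN spec[of _ "\<lambda>i. u (w i)"]] by simp
    with uv(1,2) show False by auto
  qed
  moreover have "w ` F \<subseteq> span B" using w by auto
  ultimately have "card (w ` F) \<le> card B" using independent_span_bound[OF B(1)] by blast
  with card_image[OF inj] show ?thesis by simp
qed

lemma independent_mod_if_card_le_quot_dim:
  assumes F: "finite F" and sp: "span (f ` F \<union> N) = UNIV" and le: "card F \<le> quot_dim scale N"
  shows "independent_mod scale N f F"
  unfolding independent_mod_def
proof (intro allI impI ballI, rule ccontr)
  fix c i0 assume s: "(\<Sum>i\<in>F. c i *s f i) \<in> N" and i0: "i0 \<in> F" and ne: "c i0 \<noteq> 0"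
  define F' where "F' = F - {i0}"
  have split: "(\<Sum>i\<in>F. c i *s f i) = c i0 *s f i0 + (\<Sum>i\<in>F'. c i *s f i)"
    unfolding F'_def using F i0 by (simp add: sum.remove)
  have rest: "(\<Sum>i\<in>F'. c i *s f i) \<in> span (f ` F' \<union> N)"
    by (rule span_sum, rule span_scale, rule span_base) auto
  have sN: "(\<Sum>i\<in>F. c i *s f i) \<in> span (f ` F' \<union> N)"
    using s by (auto intro: span_base)
  have "f i0 = inverse (c i0) *s ((\<Sum>i\<in>F. c i *s f i) - (\<Sum>i\<in>F'. c i *s f i))"
    unfolding split using ne by simp
  also have "\<dots> \<in> span (f ` F' \<union> N)"
    using rest sN by (intro span_scale span_diff)
  finally have "insert (f i0) (f ` F' \<union> N) \<subseteq> span (f ` F' \<union> N)"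
    using span_superset by simp
  moreover have "f ` F \<union> N \<subseteq> insert (f i0) (f ` F' \<union> N)" unfolding F'_def by blast
  ultimately have "f ` F \<union> N \<subseteq> span (f ` F' \<union> N)" by (rule order_trans[rotated])
  then have "span (f ` F \<union> N) \<subseteq> span (f ` F' \<union> N)"
    by (metis span_mono span_span)
  then have "span (f ` F' \<union> N) = UNIV" using sp by auto
  then have "quot_dim scale N \<le> card (f ` F')"
    using quot_dim_le_card F unfolding F'_def by simp
  also have "\<dots> \<le> card F'" using F unfolding F'_def by (simp add: card_image_le)
  also have "\<dots> < card F" using F i0 unfolding F'_def by (metis card_Diff1_less)
  finally show False using le by simp
qed

lemma quot_dim_eq_card:
  assumes N: "subspace N" and F: "finite F" and sp: "span (f ` F \<union> N) = UNIV"
    and ind: "independent_mod scale N f F"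
  shows "quot_dim scale N = card F"
proof -
  have "fin_quot_dim scale N" using sp F unfolding fin_quot_dim_def by blast
  then obtain B where B: "finite B" "card B = quot_dim scale N" "span (B \<union> N) = UNIV"
    by (rule quot_dim_attained)
  have "card F \<le> card B" by (rule independent_mod_card_le[OF N B(1) B(3) F ind])
  moreover have "quot_dim scale N \<le> card (f ` F)" using quot_dim_le_card[OF _ sp] F by simp
  moreover have "card (f ` F) \<le> card F" using F by (simp add: card_image_le)
  ultimately show ?thesis using B(2) by simp
qed

lemma quot_basis_exists:
  assumes "fin_quot_dim scale N"
  obtains B where "finite B" "card B = quot_dim scale N" "span (B \<union> N) = UNIV"
    "independent_mod scale N id B"
proof -
  obtain B where B: "finite B" "card B = quot_dim scale N" "span (B \<union> N) = UNIV"
    using quot_dim_attained[OF assms] .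
  have "independent_mod scale N id B" by (rule independent_mod_if_card_le_quot_dim) (use B in auto)
  with B that show ?thesis by blast
qed

end

section \<open>Ideals and their powers\<close>

global_interpretation ideal: module "(*) :: 'a::comm_ring_1 \<Rightarrow> 'a \<Rightarrow> 'a"
  by unfold_locales (simp_all add: algebra_simps)

(* scale_scale is associativity read backwards; as a simp rule it loops against mult.assoc. *)
declare ideal.scale_scale[simp del]

lemma ideal_mult_left: "ideal.subspace I \<Longrightarrow> x \<in> I \<Longrightarrow> a * x \<in> I"
  by (rule ideal.subspace_scale)

lemma ideal_mult_right: "ideal.subspace I \<Longrightarrow> x \<in> I \<Longrightarrow> x * a \<in> I"
  by (metis ideal.subspace_scale mult.commute)

lemma ideal_eq_UNIV_iff_one_mem: "ideal.subspace I \<Longrightarrow> I = UNIV \<longleftrightarrow> 1 \<in> I"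
  using ideal_mult_right[of I 1] by auto

lemma (in module) subspace_Union_chain:
  assumes "C \<noteq> {}" "\<forall>X\<in>C. \<forall>Y\<in>C. X \<subseteq> Y \<or> Y \<subseteq> X" "\<forall>X\<in>C. subspace X"
  shows "subspace (\<Union>C)"
  unfolding subspace_def
proof (intro conjI ballI allI)
  show "0 \<in> \<Union>C" using assms(1,3) by (auto intro: subspace_0)
  fix x y assume "x \<in> \<Union>C" "y \<in> \<Union>C"
  then obtain X Y where "X \<in> C" "Y \<in> C" "x \<in> X" "y \<in> Y" by auto
  with assms(2,3) show "x + y \<in> \<Union>C" by (metis UnionI subset_iff subspace_add)
next
  fix c x assume "x \<in> \<Union>C"
  with assms(3) show "c *s x \<in> \<Union>C" by (auto intro: subspace_scale)
qed

lemma ex_maximal_ideal_superset: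
  fixes J :: "'a::comm_ring_1 set"
  assumes J: "ideal.subspace J" "1 \<notin> J"
  obtains M where "maximal_ideal M" "J \<subseteq> M"
proof -
  define \<A> where "\<A> = {K. ideal.subspace K \<and> J \<subseteq> K \<and> 1 \<notin> K}"
  have "\<exists>U\<in>\<A>. \<forall>K\<in>C. K \<subseteq> U" if C: "C \<in> chains \<A>" for C
  proof (cases "C = {}")
    case True
    then show ?thesis using J unfolding \<A>_def by blast
  next
    case False
    have "ideal.subspace (\<Union>C)"
      using C False unfolding chains_def chain_subset_def \<A>_def
      by (intro ideal.subspace_Union_chain) auto
    then have "\<Union>C \<in> \<A>" using C False unfolding chains_def \<A>_def by auto
    then show ?thesis by auto
  qed
  then obtain M where M: "M \<in> \<A>" "\<forall>K\<in>\<A>. M \<subseteq> K \<longrightarrow> K = M"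
    using Zorn_Lemma2[of \<A>] by blast
  have "maximal_ideal M"
    unfolding maximal_ideal_def ring_ideal_def
  proof (intro conjI allI impI)
    show "ideal.subspace M" "M \<noteq> UNIV" using M unfolding \<A>_def by auto
    fix K assume "ideal.subspace K \<and> M \<subseteq> K"
    then show "K = M \<or> K = UNIV"
      using M ideal_eq_UNIV_iff_one_mem[of K] unfolding \<A>_def by blast
  qed
  with M(1) that show ?thesis unfolding \<A>_def by blast
qed

lemma local_ring_unit_if_notin:
  fixes u :: "'a::comm_ring_1"
  assumes "local_ring_with_max m" "u \<notin> m"
  shows "\<exists>v. u * v = 1"
proof (rule ccontr)
  assume "\<nexists>v. u * v = 1"
  then have "1 \<notin> ideal.span {u}" by (auto simp: ideal.span_singleton mult.commute)
  then obtain M where "maximal_ideal M" "ideal.span {u} \<subseteq> M"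
    using ex_maximal_ideal_superset[OF ideal.subspace_span] by blast
  with assms show False
    using ideal.span_base[of u "{u}"] unfolding local_ring_with_max_def by auto
qed

lemma ideal_pow_ideal: "ideal.subspace (ideal_pow m n)"
  unfolding ideal_pow_def by (rule ideal.subspace_span)

lemma ideal_pow_0: "ideal_pow m 0 = UNIV"
proof -
  have "1 \<in> ideal_pow m 0" unfolding ideal_pow_def
    by (rule ideal.span_base) (auto intro: exI[of _ "[]"])
  then show ?thesis using ideal_eq_UNIV_iff_one_mem[OF ideal_pow_ideal] by blast
qed

lemma ideal_pow_mult_Suc:
  assumes "a \<in> ideal_pow m j" "c \<in> m"
  shows "a * c \<in> ideal_pow m (Suc j)"
  using assms(1) unfolding ideal_pow_def
proof (induction rule: ideal.span_induct_alt)
  case base then show ?case by (simp add: ideal.span_zero)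
next
  case (step s x y)
  from step(1) obtain xs where xs: "x = prod_list xs" "length xs = j" "set xs \<subseteq> m" by auto
  have "x * c \<in> {prod_list xs | xs. length xs = Suc j \<and> set xs \<subseteq> m}"
    using xs assms(2) by (intro CollectI exI[of _ "c # xs"]) (auto simp: mult.commute)
  then have "s * (x * c) + y * c \<in> ideal.span {prod_list xs | xs. length xs = Suc j \<and> set xs \<subseteq> m}"
    using ideal.span_add[OF ideal.span_scale[OF ideal.span_base] step(2)] by blast
  then show ?case by (simp add: algebra_simps)
qed

lemma ideal_pow_Suc_subset:
  assumes "ideal.subspace m"
  shows "ideal_pow m (Suc j) \<subseteq> ideal_pow m j"
  unfolding ideal_pow_def[of m "Suc j"]
proof (rule ideal.span_minimal[OF _ ideal_pow_ideal], rule subsetI)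
  fix z assume "z \<in> {prod_list xs | xs. length xs = Suc j \<and> set xs \<subseteq> m}"
  then obtain xs where xs: "z = prod_list xs" "length xs = Suc j" "set xs \<subseteq> m" by blast
  then obtain x ys where "xs = x # ys" "length ys = j" by (cases xs) auto
  moreover have "prod_list ys \<in> ideal_pow m j"
    unfolding ideal_pow_def using xs calculation by (intro ideal.span_base) auto
  ultimately show "z \<in> ideal_pow m j" using xs(1) by (simp add: ideal_mult_left[OF ideal_pow_ideal])
qed

lemma ideal_pow_subset:
  assumes "ideal.subspace m" "0 < n"
  shows "ideal_pow m n \<subseteq> m"
  unfolding ideal_pow_def
proof (rule ideal.span_minimal[OF _ assms(1)], rule subsetI)
  fix z assume "z \<in> {prod_list xs | xs. length xs = n \<and> set xs \<subseteq> m}"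
  then obtain xs where xs: "z = prod_list xs" "length xs = n" "set xs \<subseteq> m" by blast
  then obtain x ys where "z = x * prod_list ys" "x \<in> m" using assms(2) by (cases xs) auto
  then show "z \<in> m" by (simp add: ideal_mult_right[OF assms(1)])
qed

definition monomials :: "'a::comm_ring_1 set \<Rightarrow> nat \<Rightarrow> 'a set" where
  "monomials G j = {prod_list ys | ys. length ys = j \<and> set ys \<subseteq> G}"

definition monomials_below :: "'a::comm_ring_1 set \<Rightarrow> nat \<Rightarrow> 'a set" where
  "monomials_below G j = {prod_list ys | ys. length ys < j \<and> set ys \<subseteq> G}"

lemma finite_monomials_below: "finite G \<Longrightarrow> finite (monomials_below G j)"
proof -
  assume "finite G"
  then have "finite (prod_list ` {ys. set ys \<subseteq> G \<and> length ys \<le> j})"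
    using finite_lists_length_le by blast
  moreover have "monomials_below G j \<subseteq> prod_list ` {ys. set ys \<subseteq> G \<and> length ys \<le> j}"
    unfolding monomials_below_def by auto
  ultimately show ?thesis by (rule finite_subset[rotated])
qed

lemma monomials_subset_ideal_pow: "G \<subseteq> m \<Longrightarrow> monomials G j \<subseteq> ideal_pow m j"
  unfolding ideal_pow_def monomials_def by (auto intro!: ideal.span_base)

lemma prod_list_in_span_monomials:
  assumes G: "finite G" and xs: "set xs \<subseteq> ideal.span G"
  shows "prod_list xs \<in> ideal.span (monomials G (length xs))"
  using xs
proof (induction xs)
  case Nil
  show ?case unfolding monomials_def by (rule ideal.span_base) (auto intro: exI[of _ "[]"])
next
  case (Cons x xs)
  define P where "P = prod_list xs"
  have P: "P \<in> ideal.span (monomials G (length xs))" using Cons unfolding P_def by simp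
  have "g * P \<in> ideal.span (monomials G (Suc (length xs)))" if g: "g \<in> G" for g
    using P
  proof (induction rule: ideal.span_induct_alt)
    case base then show ?case by (simp add: ideal.span_zero)
  next
    case (step s y z)
    from step(1) obtain ys where ys: "y = prod_list ys" "length ys = length xs" "set ys \<subseteq> G"
      unfolding monomials_def by auto
    have "g * y \<in> monomials G (Suc (length xs))" unfolding monomials_def using ys g
      by (intro CollectI exI[of _ "g # ys"]) auto
    then have "s * (g * y) + g * z \<in> ideal.span (monomials G (Suc (length xs)))"
      using ideal.span_add[OF ideal.span_scale[OF ideal.span_base] step(2)] by blast
    then show ?case by (simp add: algebra_simps)
  qed
  moreover obtain u where "x = (\<Sum>g\<in>G. u g * g)"
    using Cons.prems ideal.span_finite[OF G] by auto
  then have "prod_list (x # xs) = (\<Sum>g\<in>G. u g * (g * P))"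
    unfolding P_def by (simp add: sum_distrib_right mult.assoc)
  ultimately show ?case
    by (simp add: ideal.span_sum ideal.span_scale)
qed

lemma ideal_pow_subset_span_monomials:
  assumes "finite G" "ideal.span G = m"
  shows "ideal_pow m j \<subseteq> ideal.span (monomials G j)"
  unfolding ideal_pow_def
  using prod_list_in_span_monomials[OF assms(1)] assms(2)
  by (intro ideal.span_minimal[OF _ ideal.subspace_span]) auto

lemma prod_list_eq_power_count_mult_removeAll:
  "prod_list ys = (g::'a::comm_monoid_mult) ^ count_list ys g * prod_list (removeAll g ys)"
  by (induction ys) (auto simp: algebra_simps)

section \<open>Local k-algebras\<close>

locale k_algebra =
  fixes phi :: "'k::field \<Rightarrow> 'a::comm_ring_1"
  assumes hom: "ring_hom_fun phi"
begin

lemma phi_add[simp]: "phi (x + y) = phi x + phi y"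
  and phi_mult[simp]: "phi (x * y) = phi x * phi y"
  and phi_one[simp]: "phi 1 = 1"
  using hom unfolding ring_hom_fun_def by auto

lemma phi_zero[simp]: "phi 0 = 0"
  using phi_add[of 0 0] by simp

sublocale kA: vector_space "\<lambda>c (a::'a). phi c * a"
  by unfold_locales (simp_all add: algebra_simps)

lemma ideal_is_k_subspace: "ideal.subspace I \<Longrightarrow> kA.subspace I"
  unfolding ideal.subspace_def kA.subspace_def by auto

end

locale local_k_algebra = k_algebra phi
  for phi :: "'k::field \<Rightarrow> 'a::comm_ring_1" +
  fixes m :: "'a set"
  assumes noeth: "noetherian_ring TYPE('a)"
    and loc: "local_ring_with_max m"
    and res: "residue_field_is phi m"
begin

lemma m_ideal: "ideal.subspace m"
  using loc unfolding local_ring_with_max_def maximal_ideal_def ring_ideal_def by auto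

lemma one_notin_m: "1 \<notin> m"
  using loc ideal_eq_UNIV_iff_one_mem[OF m_ideal]
  unfolding local_ring_with_max_def maximal_ideal_def by auto

lemma phi_mem_m_iff: "phi c \<in> m \<longleftrightarrow> c = 0"
proof
  assume "phi c \<in> m"
  show "c = 0"
  proof (rule ccontr)
    assume "c \<noteq> 0"
    then have "phi (inverse c * c) = 1" by simp
    with ideal_mult_left[OF m_ideal \<open>phi c \<in> m\<close>, of "phi (inverse c)"] one_notin_m
    show False by simp
  qed
qed (simp add: ideal.subspace_0[OF m_ideal])

lemma m_finitely_generated: obtains G where "finite G" "ideal.span G = m"
  using noeth m_ideal that unfolding noetherian_ring_def ring_ideal_def by auto

lemma span_one_m: "kA.span ({1} \<union> m) = UNIV"
proof -
  have "a \<in> kA.span ({1} \<union> m)" for a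
  proof -
    obtain c where c: "a - phi c \<in> m" using res unfolding residue_field_is_def by blast
    have "phi c * 1 + (a - phi c) \<in> kA.span ({1} \<union> m)"
      using c by (intro kA.span_add kA.span_scale kA.span_base) auto
    then show ?thesis by simp
  qed
  then show ?thesis by auto
qed

text \<open>Since A = k + m, the k-span of the degree j monomials and of m^(j+1) is already an
  ideal; it contains the generators of m^j.\<close>
lemma ideal_pow_subset_span_monomials_ideal_pow_Suc:
  assumes G: "finite G" "ideal.span G = m"
  shows "ideal_pow m j \<subseteq> kA.span (monomials G j \<union> ideal_pow m (Suc j))"
proof -
  define W where "W = kA.span (monomials G j \<union> ideal_pow m (Suc j))"
  have "W \<subseteq> ideal_pow m j" unfolding W_def
    using monomials_subset_ideal_pow[of G m] G(2) ideal.span_superset[of G]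
      ideal_pow_Suc_subset[OF m_ideal] ideal_is_k_subspace[OF ideal_pow_ideal]
    by (intro kA.span_minimal) auto
  have "ideal.subspace W" unfolding ideal.subspace_def
  proof (intro conjI ballI allI)
    show "0 \<in> W" unfolding W_def by (rule kA.span_zero)
    fix x y assume "x \<in> W" "y \<in> W"
    then show "x + y \<in> W" unfolding W_def by (rule kA.span_add)
  next
    fix a w assume w: "w \<in> W"
    obtain c where c: "a - phi c \<in> m" using res unfolding residue_field_is_def by blast
    have "phi c * w \<in> W" using w unfolding W_def by (rule kA.span_scale)
    moreover have "w * (a - phi c) \<in> ideal_pow m (Suc j)"
      using \<open>W \<subseteq> ideal_pow m j\<close> w c by (intro ideal_pow_mult_Suc) auto
    then have "w * (a - phi c) \<in> W" unfolding W_def by (intro kA.span_base) auto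
    ultimately have "phi c * w + w * (a - phi c) \<in> W" unfolding W_def by (rule kA.span_add)
    then show "a * w \<in> W" by (simp add: algebra_simps)
  qed
  moreover have "monomials G j \<subseteq> W" unfolding W_def by (auto intro: kA.span_base)
  ultimately have "ideal.span (monomials G j) \<subseteq> W" by (intro ideal.span_minimal)
  with ideal_pow_subset_span_monomials[OF G] show ?thesis unfolding W_def by auto
qed

lemma span_monomials_below_ideal_pow:
  assumes G: "finite G" "ideal.span G = m"
  shows "kA.span (monomials_below G N \<union> ideal_pow m N) = UNIV"
proof (induction N)
  case 0
  show ?case by (simp add: ideal_pow_0)
next
  case (Suc N)
  define S where "S = monomials_below G (Suc N) \<union> ideal_pow m (Suc N)"
  have "monomials_below G N \<subseteq> kA.span S" unfolding S_def monomials_below_def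
    by (auto intro!: kA.span_base)
  moreover have "monomials G N \<union> ideal_pow m (Suc N) \<subseteq> S"
    unfolding S_def monomials_def monomials_below_def by auto
  then have "ideal_pow m N \<subseteq> kA.span S"
    using ideal_pow_subset_span_monomials_ideal_pow_Suc[OF G, of N] kA.span_mono by blast
  ultimately have "kA.span (monomials_below G N \<union> ideal_pow m N) \<subseteq> kA.span S"
    by (intro kA.span_minimal) auto
  then show ?case using Suc unfolding S_def by auto
qed

lemma fin_quot_dim_ideal_pow: "fin_quot_dim (\<lambda>c a. phi c * a) (ideal_pow m N)"
proof -
  obtain G where G: "finite G" "ideal.span G = m" by (rule m_finitely_generated)
  show ?thesis unfolding fin_quot_dim_def
    using span_monomials_below_ideal_pow[OF G, of N] finite_monomials_below[OF G(1)] by blast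
qed

lemma dim_ring_quot_ideal_pow_pos:
  assumes "0 < n"
  shows "0 < dim_ring_quot phi (ideal_pow m n)"
proof (rule ccontr)
  assume "\<not> 0 < dim_ring_quot phi (ideal_pow m n)"
  moreover obtain B where "finite B" "card B = dim_ring_quot phi (ideal_pow m n)"
    "kA.span (B \<union> ideal_pow m n) = UNIV"
    using kA.quot_dim_attained[OF fin_quot_dim_ideal_pow[of n]] unfolding dim_ring_quot_def .
  ultimately have "kA.span (ideal_pow m n) = UNIV" by simp
  then have "ideal_pow m n = UNIV"
    by (metis kA.span_eq_iff ideal_is_k_subspace ideal_pow_ideal)
  then show False using ideal_pow_subset[OF m_ideal assms] one_notin_m by auto
qed

text \<open>The powers 1, a, ..., a^n are dependent modulo I; dividing the relation by the power of
  a in its lowest nonzero term leaves a unit cofactor, as its constant term is a nonzero scalar.\<close>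
lemma power_mem_ideal_of_finite_colength:
  assumes I: "ideal.subspace I" "fin_quot_dim (\<lambda>c a. phi c * a) I" and a: "a \<in> m"
  shows "\<exists>i \<le> quot_dim (\<lambda>c a. phi c * a) I. a ^ i \<in> I"
proof -
  define n where "n = quot_dim (\<lambda>c a. phi c * a) I"
  obtain B where B: "finite B" "card B = n" "kA.span (B \<union> I) = UNIV"
    using kA.quot_dim_attained[OF I(2)] unfolding n_def by blast
  have "\<not> independent_mod (\<lambda>c a. phi c * a) I (\<lambda>i. a ^ i) {0..n}"
    using kA.independent_mod_card_le[OF ideal_is_k_subspace[OF I(1)] B(1) B(3)] B(2) by fastforce
  then obtain c where c: "(\<Sum>i\<in>{0..n}. phi (c i) * a ^ i) \<in> I" "\<exists>i\<in>{0..n}. c i \<noteq> 0"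
    unfolding independent_mod_def by blast
  define i0 where "i0 = (LEAST i. i \<le> n \<and> c i \<noteq> 0)"
  have "i0 \<le> n \<and> c i0 \<noteq> 0" unfolding i0_def by (rule LeastI_ex) (use c(2) in auto)
  moreover have "c i = 0" if "i < i0" for i
    using not_less_Least[OF that[unfolded i0_def]] that calculation by auto
  ultimately have i0: "i0 \<le> n" "c i0 \<noteq> 0" "\<forall>i<i0. c i = 0" by auto
  define u where "u = (\<Sum>i\<in>{i0..n}. phi (c i) * a ^ (i - i0))"
  have "(\<Sum>i\<in>{0..n}. phi (c i) * a ^ i) = (\<Sum>i\<in>{i0..n}. phi (c i) * a ^ i)"
    using i0(3) by (intro sum.mono_neutral_right) auto
  also have "\<dots> = a ^ i0 * u" unfolding u_def sum_distrib_left
  proof (rule sum.cong[OF refl])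
    fix i assume "i \<in> {i0..n}"
    then have "a ^ i = a ^ i0 * a ^ (i - i0)" by (simp add: power_add[symmetric])
    then show "phi (c i) * a ^ i = a ^ i0 * (phi (c i) * a ^ (i - i0))" by (simp add: algebra_simps)
  qed
  finally have "a ^ i0 * u \<in> I" using c(1) by simp
  have "u - phi (c i0) = (\<Sum>i\<in>{Suc i0..n}. phi (c i) * a ^ (i - i0))"
    unfolding u_def using i0(1) by (simp add: sum.atLeast_Suc_atMost)
  also have "\<dots> \<in> m"
  proof (rule ideal.subspace_sum[OF m_ideal])
    fix i assume "i \<in> {Suc i0..n}"
    then have "i - i0 = Suc (i - Suc i0)" by auto
    then have "a ^ (i - i0) = a * a ^ (i - Suc i0)" by simp
    then show "phi (c i) * a ^ (i - i0) \<in> m" by (simp add: ideal_mult_left[OF m_ideal] ideal_mult_right[OF m_ideal a])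
  qed
  finally have "u \<notin> m"
    using ideal.subspace_diff[OF m_ideal, of u "u - phi (c i0)"] phi_mem_m_iff i0(2) by auto
  then obtain v where "u * v = 1" using local_ring_unit_if_notin[OF loc] by blast
  then have "a ^ i0 = v * (a ^ i0 * u)" by (metis mult.commute mult.left_commute mult_1_right)
  also have "\<dots> \<in> I" using \<open>a ^ i0 * u \<in> I\<close> by (rule ideal_mult_left[OF I(1)])
  finally show ?thesis using i0(1) unfolding n_def by blast
qed

text \<open>With |G| generators of m and a^n in I for all a in m, every monomial of degree
  |G| n + 1 contains some generator at least n + 1 times.\<close>
lemma ideal_pow_subset_ideal_of_finite_colength:
  assumes I: "ideal.subspace I" "fin_quot_dim (\<lambda>c a. phi c * a) I"
  obtains N where "0 < N" "ideal_pow m N \<subseteq> I"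
proof -
  define n where "n = quot_dim (\<lambda>c a. phi c * a) I"
  have pow_mem: "a ^ k \<in> I" if "a \<in> m" "n \<le> k" for a k
  proof -
    obtain i where "i \<le> n" "a ^ i \<in> I"
      using power_mem_ideal_of_finite_colength[OF I \<open>a \<in> m\<close>] unfolding n_def by blast
    then show ?thesis
      using ideal_mult_left[OF I(1), of "a ^ i" "a ^ (k - i)"] \<open>n \<le> k\<close> by (simp add: power_add[symmetric])
  qed
  obtain G where G: "finite G" "ideal.span G = m" by (rule m_finitely_generated)
  define N where "N = card G * n + 1"
  have "monomials G N \<subseteq> I"
  proof
    fix z assume "z \<in> monomials G N"
    then obtain ys where ys: "z = prod_list ys" "length ys = N" "set ys \<subseteq> G"
      unfolding monomials_def by auto
    obtain g where g: "g \<in> G" "n < count_list ys g"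
    proof (rule ccontr)
      assume "\<not> thesis"
      then have "sum (count_list ys) G \<le> card G * n"
        using that sum_bounded_above[of G "count_list ys" n] by force
      with sum_count_set[OF ys(3) G(1)] ys(2) show False unfolding N_def by simp
    qed
    have "g ^ count_list ys g \<in> I"
      using g pow_mem G(2) ideal.span_superset[of G] by auto
    then show "z \<in> I" unfolding ys(1) prod_list_eq_power_count_mult_removeAll[of ys g]
      by (rule ideal_mult_right[OF I(1)])
  qed
  then have "ideal.span (monomials G N) \<subseteq> I" by (rule ideal.span_minimal[OF _ I(1)])
  with ideal_pow_subset_span_monomials[OF G, of N] that show ?thesis unfolding N_def by auto
qed

end

section \<open>Modules modulo J M\<close>

text \<open>This is J X + S; the module is generated by X modulo S when it is everything for
  J = UNIV.\<close>
definition lincomb_plus ::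
  "('a::comm_ring_1 \<Rightarrow> 'm::ab_group_add \<Rightarrow> 'm) \<Rightarrow> 'a set \<Rightarrow> 'm set \<Rightarrow> 'm set \<Rightarrow> 'm set" where
  "lincomb_plus sm J X S = {(\<Sum>x\<in>X. sm (e x) x) + z | e z. (\<forall>x. e x \<in> J) \<and> z \<in> S}"

text \<open>Together with generation of M modulo J M by X, this says that M/JM is free over A/J
  with basis the image of X.\<close>
definition free_modulo ::
  "('a::comm_ring_1 \<Rightarrow> 'm::ab_group_add \<Rightarrow> 'm) \<Rightarrow> 'a set \<Rightarrow> 'm set \<Rightarrow> bool" where
  "free_modulo sm J X \<longleftrightarrow>
     (\<forall>a. (\<Sum>x\<in>X. sm (a x) x) \<in> ideal_times_mod sm J \<longrightarrow> (\<forall>x\<in>X. a x \<in> J))"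

context module
begin

lemma subspace_ideal_times_mod: "subspace (ideal_times_mod scale J)"
  unfolding ideal_times_mod_def by (rule subspace_span)

lemma scale_mem_ideal_times_mod: "a \<in> J \<Longrightarrow> a *s x \<in> ideal_times_mod scale J"
  unfolding ideal_times_mod_def by (rule span_base) blast

lemma ideal_times_mod_mono: "J \<subseteq> J' \<Longrightarrow> ideal_times_mod scale J \<subseteq> ideal_times_mod scale J'"
  unfolding ideal_times_mod_def by (rule span_mono) blast

lemma scale_mem_ideal_times_mod_product:
  assumes "\<forall>c\<in>K. a * c \<in> L" "z \<in> ideal_times_mod scale K"
  shows "a *s z \<in> ideal_times_mod scale L"
  using assms(2) unfolding ideal_times_mod_def[of scale K]
proof (induction rule: span_induct_alt)
  case base
  then show ?case using subspace_0[OF subspace_ideal_times_mod] by simp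
next
  case (step s g z')
  from step(1) obtain c w where g: "g = c *s w" "c \<in> K" by blast
  have acw: "(a * c) *s w \<in> ideal_times_mod scale L"
    using assms(1) g(2) by (intro scale_mem_ideal_times_mod) auto
  have "s *s ((a * c) *s w) + a *s z' \<in> ideal_times_mod scale L"
    using subspace_add[OF subspace_ideal_times_mod subspace_scale[OF subspace_ideal_times_mod acw] step(2)] .
  then show ?case unfolding g(1) by (simp add: scale_right_distrib mult.commute mult.left_commute)
qed

lemma lincomb_plus_mono:
  "J \<subseteq> J' \<Longrightarrow> S \<subseteq> S' \<Longrightarrow> lincomb_plus scale J X S \<subseteq> lincomb_plus scale J' X S'"
  unfolding lincomb_plus_def by blast

lemma lincomb_plus_UNIV_absorb:
  assumes "S \<subseteq> lincomb_plus scale UNIV X S'"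
  shows "lincomb_plus scale UNIV X S \<subseteq> lincomb_plus scale UNIV X S'"
proof
  fix v assume "v \<in> lincomb_plus scale UNIV X S"
  then obtain u z where v: "v = (\<Sum>x\<in>X. u x *s x) + z" "z \<in> S"
    unfolding lincomb_plus_def by blast
  then obtain u' z' where "z = (\<Sum>x\<in>X. u' x *s x) + z'" "z' \<in> S'"
    using assms unfolding lincomb_plus_def by blast
  then have "v = (\<Sum>x\<in>X. (u x + u' x) *s x) + z'"
    using v(1) by (simp add: scale_left_distrib sum.distrib algebra_simps)
  with \<open>z' \<in> S'\<close> show "v \<in> lincomb_plus scale UNIV X S'"
    unfolding lincomb_plus_def by (intro CollectI exI[of _ "\<lambda>x. u x + u' x"] exI[of _ z']) auto
qed

lemma subspace_lincomb_plus:
  assumes J: "ideal.subspace J" and S: "subspace S"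
  shows "subspace (lincomb_plus scale J X S)"
  unfolding subspace_def lincomb_plus_def
proof (intro conjI ballI allI)
  show "0 \<in> {(\<Sum>x\<in>X. e x *s x) + z | e z. (\<forall>x. e x \<in> J) \<and> z \<in> S}"
    using subspace_0[OF S] ideal.subspace_0[OF J]
    by (intro CollectI exI[of _ "\<lambda>x. 0"] exI[of _ 0]) auto
  fix p q assume "p \<in> {(\<Sum>x\<in>X. e x *s x) + z | e z. (\<forall>x. e x \<in> J) \<and> z \<in> S}"
    "q \<in> {(\<Sum>x\<in>X. e x *s x) + z | e z. (\<forall>x. e x \<in> J) \<and> z \<in> S}"
  then obtain u1 z1 u2 z2 where "p = (\<Sum>x\<in>X. u1 x *s x) + z1" "z1 \<in> S" "\<forall>x. u1 x \<in> J"
    "q = (\<Sum>x\<in>X. u2 x *s x) + z2" "z2 \<in> S" "\<forall>x. u2 x \<in> J"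
    by blast
  then show "p + q \<in> {(\<Sum>x\<in>X. e x *s x) + z | e z. (\<forall>x. e x \<in> J) \<and> z \<in> S}"
    by (intro CollectI exI[of _ "\<lambda>x. u1 x + u2 x"] exI[of _ "z1 + z2"])
      (auto simp: scale_left_distrib sum.distrib intro: subspace_add[OF S] ideal.subspace_add[OF J])
next
  fix s p assume "p \<in> {(\<Sum>x\<in>X. e x *s x) + z | e z. (\<forall>x. e x \<in> J) \<and> z \<in> S}"
  then obtain u z where "p = (\<Sum>x\<in>X. u x *s x) + z" "z \<in> S" "\<forall>x. u x \<in> J"
    by blast
  then show "s *s p \<in> {(\<Sum>x\<in>X. e x *s x) + z | e z. (\<forall>x. e x \<in> J) \<and> z \<in> S}"
    by (intro CollectI exI[of _ "\<lambda>x. s * u x"] exI[of _ "s *s z"])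
      (auto simp: scale_right_distrib scale_sum_right intro: subspace_scale[OF S] ideal_mult_left[OF J])
qed

lemma ideal_times_mod_subset_lincomb_plus:
  assumes gen: "lincomb_plus scale UNIV X (ideal_times_mod scale K) = UNIV"
    and J: "ideal.subspace J" and JK: "\<forall>a\<in>J. \<forall>c\<in>K. a * c \<in> L"
  shows "ideal_times_mod scale J \<subseteq> lincomb_plus scale J X (ideal_times_mod scale L)"
  unfolding ideal_times_mod_def[of scale J]
proof (rule span_minimal[OF _ subspace_lincomb_plus[OF J subspace_ideal_times_mod]], safe)
  fix a y assume a: "a \<in> J"
  obtain u z where uz: "y = (\<Sum>x\<in>X. u x *s x) + z" "z \<in> ideal_times_mod scale K"
    using gen unfolding lincomb_plus_def by blast
  have "a *s y = (\<Sum>x\<in>X. (a * u x) *s x) + a *s z"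
    unfolding uz(1) by (simp add: scale_right_distrib scale_sum_right)
  moreover have "a *s z \<in> ideal_times_mod scale L"
    using JK a uz(2) by (intro scale_mem_ideal_times_mod_product) auto
  ultimately show "a *s y \<in> lincomb_plus scale J X (ideal_times_mod scale L)"
    unfolding lincomb_plus_def using ideal_mult_right[OF J a]
    by (intro CollectI exI[of _ "\<lambda>x. a * u x"] exI[of _ "a *s z"]) auto
qed

text \<open>A weak form of Nakayama's lemma that needs no finiteness: generators modulo m M are
  generators modulo every m^N M.\<close>
lemma lincomb_plus_ideal_pow:
  assumes m: "ideal.subspace m"
    and gen: "lincomb_plus scale UNIV X (ideal_times_mod scale m) = UNIV"
  shows "lincomb_plus scale UNIV X (ideal_times_mod scale (ideal_pow m N)) = UNIV"
proof (induction N)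
  case 0
  have "v \<in> ideal_times_mod scale UNIV" for v
    using scale_mem_ideal_times_mod[of 1 UNIV v] by simp
  then show ?case unfolding ideal_pow_0 lincomb_plus_def
    by (auto intro!: exI[of _ "\<lambda>x. 0"])
next
  case (Suc j)
  have "ideal_times_mod scale (ideal_pow m j)
      \<subseteq> lincomb_plus scale (ideal_pow m j) X (ideal_times_mod scale (ideal_pow m (Suc j)))"
    using gen ideal_pow_mult_Suc by (intro ideal_times_mod_subset_lincomb_plus ideal_pow_ideal) auto
  also have "\<dots> \<subseteq> lincomb_plus scale UNIV X (ideal_times_mod scale (ideal_pow m (Suc j)))"
    by (rule lincomb_plus_mono) auto
  finally show ?case
    using lincomb_plus_UNIV_absorb Suc.IH by blast
qed

lemma free_modulo_mono:
  assumes P: "ideal.subspace P" and I: "ideal.subspace I" "P \<subseteq> I"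
    and gen: "lincomb_plus scale UNIV X (ideal_times_mod scale P) = UNIV"
    and free: "free_modulo scale P X"
  shows "free_modulo scale I X"
  unfolding free_modulo_def
proof (intro allI impI ballI)
  fix a x assume rel: "(\<Sum>x\<in>X. a x *s x) \<in> ideal_times_mod scale I" and x: "x \<in> X"
  have "ideal_times_mod scale I \<subseteq> lincomb_plus scale I X (ideal_times_mod scale P)"
    using ideal_mult_left[OF P] by (intro ideal_times_mod_subset_lincomb_plus[OF gen I(1)]) auto
  with rel obtain e z where ez: "(\<Sum>x\<in>X. a x *s x) = (\<Sum>x\<in>X. e x *s x) + z"
    "\<forall>x. e x \<in> I" "z \<in> ideal_times_mod scale P"
    unfolding lincomb_plus_def by blast
  then have "(\<Sum>x\<in>X. (a x - e x) *s x) \<in> ideal_times_mod scale P"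
    by (simp add: scale_left_diff_distrib sum_subtractf)
  then have "a x - e x \<in> P"
    using free x unfolding free_modulo_def by (auto dest: spec[of _ "\<lambda>x. a x - e x"])
  then show "a x \<in> I"
    using I ez(2) ideal.subspace_add[OF I(1), of "a x - e x" "e x"] by auto
qed

end

locale k_algebra_module = k_algebra phi + M: module sm
  for phi :: "'k::field \<Rightarrow> 'a::comm_ring_1" and sm :: "'a \<Rightarrow> 'm::ab_group_add \<Rightarrow> 'm"
begin

sublocale kM: vector_space "\<lambda>c x. sm (phi c) x"
  by unfold_locales (simp_all add: M.scale_right_distrib M.scale_left_distrib)

lemma k_subspace_ideal_times_mod: "kM.subspace (ideal_times_mod sm J)"
  using M.subspace_ideal_times_mod unfolding M.subspace_def kM.subspace_def by auto

lemma sum_scale_sum_eq_sum_product: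
  "(\<Sum>x\<in>X. sm (\<Sum>b\<in>B. phi (C (b, x)) * b) x)
     = (\<Sum>i\<in>B \<times> X. sm (phi (C i)) ((\<lambda>(b, x). sm b x) i))"
proof -
  have "(\<Sum>x\<in>X. sm (\<Sum>b\<in>B. phi (C (b, x)) * b) x) = (\<Sum>x\<in>X. \<Sum>b\<in>B. sm (phi (C (b, x))) (sm b x))"
    by (simp add: M.scale_sum_left)
  also have "\<dots> = (\<Sum>b\<in>B. \<Sum>x\<in>X. sm (phi (C (b, x))) (sm b x))" by (rule sum.swap)
  also have "\<dots> = (\<Sum>(b, x)\<in>B \<times> X. sm (phi (C (b, x))) (sm b x))" by (rule sum.cartesian_product)
  also have "\<dots> = (\<Sum>i\<in>B \<times> X. sm (phi (C i)) ((\<lambda>(b, x). sm b x) i))"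
    by (rule sum.cong) auto
  finally show ?thesis .
qed

lemma span_products_ideal_times_mod:
  assumes B: "kA.span (B \<union> J) = UNIV"
    and gen: "lincomb_plus sm UNIV X (ideal_times_mod sm J) = UNIV"
  shows "kM.span ((\<lambda>(b, x). sm b x) ` (B \<times> X) \<union> ideal_times_mod sm J) = UNIV"
proof -
  define W where "W = kM.span ((\<lambda>(b, x). sm b x) ` (B \<times> X) \<union> ideal_times_mod sm J)"
  have ax: "sm a x \<in> W" if x: "x \<in> X" for a x
  proof -
    have "sm 0 x \<in> W" unfolding W_def by (simp add: kM.span_zero)
    moreover have "sm (p + q) x \<in> W" "sm (phi c * p) x \<in> W"
      if "sm p x \<in> W" "sm q x \<in> W" for c p q
      using that kM.span_scale[OF that(1)[unfolded W_def], of c] unfolding W_def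
      by (simp_all add: M.scale_left_distrib kM.span_add)
    ultimately have "kA.subspace {a. sm a x \<in> W}"
      unfolding kA.subspace_def by auto
    moreover have "B \<union> J \<subseteq> {a. sm a x \<in> W}" unfolding W_def using x
      by (auto intro!: kM.span_base M.scale_mem_ideal_times_mod)
    ultimately have "kA.span (B \<union> J) \<subseteq> {a. sm a x \<in> W}" by (rule kA.span_minimal[rotated])
    then show ?thesis using B by auto
  qed
  have "v \<in> W" for v
  proof -
    have "v \<in> lincomb_plus sm UNIV X (ideal_times_mod sm J)" using gen by simp
    then obtain u z where uz: "v = (\<Sum>x\<in>X. sm (u x) x) + z" "z \<in> ideal_times_mod sm J"
      unfolding lincomb_plus_def by blast
    have "(\<Sum>x\<in>X. sm (u x) x) \<in> W"
      using ax unfolding W_def by (intro kM.span_sum) auto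
    moreover have "z \<in> W" unfolding W_def using uz(2) by (intro kM.span_base) auto
    ultimately show ?thesis unfolding uz(1) W_def by (rule kM.span_add)
  qed
  then show ?thesis unfolding W_def by auto
qed

lemma independent_mod_products_if_free_modulo:
  assumes free: "free_modulo sm J X" and B: "independent_mod (\<lambda>c a. phi c * a) J id B"
  shows "independent_mod (\<lambda>c x. sm (phi c) x) (ideal_times_mod sm J) (\<lambda>(b, x). sm b x) (B \<times> X)"
  unfolding independent_mod_def
proof (intro allI impI ballI)
  fix C i assume rel0: "(\<Sum>i\<in>B \<times> X. sm (phi (C i)) ((\<lambda>(b, x). sm b x) i)) \<in> ideal_times_mod sm J"
    and i: "i \<in> B \<times> X"
  from rel0 have rel: "(\<Sum>x\<in>X. sm (\<Sum>b\<in>B. phi (C (b, x)) * b) x) \<in> ideal_times_mod sm J"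
    unfolding sum_scale_sum_eq_sum_product .
  have "\<forall>x\<in>X. (\<Sum>b\<in>B. phi (C (b, x)) * b) \<in> J"
    using free[unfolded free_modulo_def, rule_format, OF rel] by blast
  then show "C i = 0"
    using i B unfolding independent_mod_def by (auto dest!: spec[of _ "\<lambda>b. C (b, snd i)"])
qed

lemma free_modulo_if_independent_mod_products:
  assumes J: "ideal.subspace J" and B: "finite B" "kA.span (B \<union> J) = UNIV"
    and ind: "independent_mod (\<lambda>c x. sm (phi c) x) (ideal_times_mod sm J) (\<lambda>(b, x). sm b x) (B \<times> X)"
  shows "free_modulo sm J X"
  unfolding free_modulo_def
proof (intro allI impI ballI)
  fix a x assume rel: "(\<Sum>x\<in>X. sm (a x) x) \<in> ideal_times_mod sm J" and x: "x \<in> X"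
  have "\<forall>x. \<exists>c. a x - (\<Sum>b\<in>B. phi (c b) * b) \<in> J"
    using kA.ex_coeffs_mod_subspace[OF ideal_is_k_subspace[OF J] B] by blast
  then obtain c where c: "\<And>x. a x - (\<Sum>b\<in>B. phi (c x b) * b) \<in> J" by metis
  define C where "C = (\<lambda>(b, x). c x b)"
  have "(\<Sum>x\<in>X. sm (\<Sum>b\<in>B. phi (C (b, x)) * b) x)
      = (\<Sum>x\<in>X. sm (a x) x) - (\<Sum>x\<in>X. sm (a x - (\<Sum>b\<in>B. phi (c x b) * b)) x)"
    unfolding C_def by (simp add: sum_subtractf[symmetric] M.scale_left_diff_distrib)
  also have "\<dots> \<in> ideal_times_mod sm J"
    using c by (intro M.subspace_diff[OF M.subspace_ideal_times_mod rel]
        M.subspace_sum[OF M.subspace_ideal_times_mod] M.scale_mem_ideal_times_mod)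
  finally have "\<forall>i\<in>B \<times> X. C i = 0"
    using ind unfolding sum_scale_sum_eq_sum_product independent_mod_def by blast
  then have "(\<Sum>b\<in>B. phi (c x b) * b) = 0" using x unfolding C_def by auto
  then show "a x \<in> J" using c[of x] by simp
qed

lemma dim_tensor_quot_eq_iff_free_modulo:
  assumes J: "ideal.subspace J" "fin_quot_dim (\<lambda>c a. phi c * a) J" and X: "finite X"
    and gen: "lincomb_plus sm UNIV X (ideal_times_mod sm J) = UNIV"
  shows "dim_tensor_quot phi sm J = dim_ring_quot phi J * card X \<longleftrightarrow> free_modulo sm J X"
proof -
  obtain B where B: "finite B" "card B = dim_ring_quot phi J" "kA.span (B \<union> J) = UNIV"
    "independent_mod (\<lambda>c a. phi c * a) J id B"
    using kA.quot_basis_exists[OF J(2)] unfolding dim_ring_quot_def .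
  have span: "kM.span ((\<lambda>(b, x). sm b x) ` (B \<times> X) \<union> ideal_times_mod sm J) = UNIV"
    by (rule span_products_ideal_times_mod[OF B(3) gen])
  have card: "card (B \<times> X) = dim_ring_quot phi J * card X"
    using B(2) by (simp add: card_cartesian_product)
  show ?thesis
  proof
    assume "dim_tensor_quot phi sm J = dim_ring_quot phi J * card X"
    then have "independent_mod (\<lambda>c x. sm (phi c) x) (ideal_times_mod sm J) (\<lambda>(b, x). sm b x) (B \<times> X)"
      using kM.independent_mod_if_card_le_quot_dim[OF _ span] B(1) X card
      unfolding dim_tensor_quot_def by simp
    then show "free_modulo sm J X"
      by (rule free_modulo_if_independent_mod_products[OF J(1) B(1,3)])
  next
    assume "free_modulo sm J X"
    then have "independent_mod (\<lambda>c x. sm (phi c) x) (ideal_times_mod sm J) (\<lambda>(b, x). sm b x) (B \<times> X)"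
      using B(4) by (rule independent_mod_products_if_free_modulo)
    then show "dim_tensor_quot phi sm J = dim_ring_quot phi J * card X"
      using kM.quot_dim_eq_card[OF k_subspace_ideal_times_mod _ span] B(1) X card
      unfolding dim_tensor_quot_def by simp
  qed
qed

end

locale local_k_algebra_module = local_k_algebra phi m + k_algebra_module phi sm
  for phi :: "'k::field \<Rightarrow> 'a::comm_ring_1" and m :: "'a set"
    and sm :: "'a \<Rightarrow> 'm::ab_group_add \<Rightarrow> 'm" +
  assumes fg: "finitely_generated_mod sm"
begin

lemma colength_ideal_pow: "colength phi (ideal_pow m n) (dim_ring_quot phi (ideal_pow m n))"
  unfolding colength_def ring_ideal_def using ideal_pow_ideal fin_quot_dim_ideal_pow by blast

lemma fin_quot_dim_ideal_times_mod_m: "fin_quot_dim (\<lambda>c x. sm (phi c) x) (ideal_times_mod sm m)"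
proof -
  obtain S where S: "finite S" "M.span S = UNIV"
    using fg unfolding finitely_generated_mod_def by auto
  have "v \<in> lincomb_plus sm UNIV S (ideal_times_mod sm m)" for v
  proof -
    have "v \<in> M.span S" using S(2) by simp
    then obtain u where "v = (\<Sum>x\<in>S. sm (u x) x)" unfolding M.span_finite[OF S(1)] by blast
    then show ?thesis unfolding lincomb_plus_def
      using M.subspace_0[OF M.subspace_ideal_times_mod] by (intro CollectI exI[of _ u] exI[of _ 0]) auto
  qed
  then have "lincomb_plus sm UNIV S (ideal_times_mod sm m) = UNIV" by blast
  then have "kM.span ((\<lambda>(b, x). sm b x) ` ({1} \<times> S) \<union> ideal_times_mod sm m) = UNIV"
    by (rule span_products_ideal_times_mod[OF span_one_m])
  then show ?thesis unfolding fin_quot_dim_def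
    using S(1) by (intro exI[of _ "(\<lambda>(b, x). sm b x) ` ({1} \<times> S)"]) simp
qed

lemma minimal_generators_mod_m:
  obtains X where "finite X" "card X = dim_tensor_quot phi sm m"
    "lincomb_plus sm UNIV X (ideal_times_mod sm m) = UNIV"
proof -
  obtain X where X: "finite X" "card X = dim_tensor_quot phi sm m"
    "kM.span (X \<union> ideal_times_mod sm m) = UNIV"
    using kM.quot_dim_attained[OF fin_quot_dim_ideal_times_mod_m] unfolding dim_tensor_quot_def .
  have "v \<in> lincomb_plus sm UNIV X (ideal_times_mod sm m)" for v
  proof -
    obtain w where w: "w \<in> kM.span X" "v - w \<in> ideal_times_mod sm m"
      using kM.span_Un_subspaceE[OF k_subspace_ideal_times_mod] X(3) by blast
    then obtain u where "w = (\<Sum>x\<in>X. sm (phi (u x)) x)" unfolding kM.span_finite[OF X(1)] by auto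
    then show ?thesis unfolding lincomb_plus_def
      using w by (intro CollectI exI[of _ "\<lambda>x. phi (u x)"] exI[of _ "v - w"]) auto
  qed
  with X that show ?thesis by blast
qed

text \<open>If m^N \<subseteq> I, minimal generators X of M modulo m M generate M modulo m^N M, where the
  hypothesis turns them into a basis of M/m^N M over A/m^N; a basis over A/m^N descends to
  a basis of M/I M over A/I.\<close>
lemma dim_tensor_quot_of_colength:
  assumes H: "\<forall>N>0. dim_tensor_quot phi sm (ideal_pow m N)
                      = dim_ring_quot phi (ideal_pow m N) * dim_tensor_quot phi sm m"
    and "colength phi I n"
  shows "dim_tensor_quot phi sm I = n * dim_tensor_quot phi sm m"
proof -
  obtain X where X: "finite X" "card X = dim_tensor_quot phi sm m"
    and gen_m: "lincomb_plus sm UNIV X (ideal_times_mod sm m) = UNIV"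
    by (rule minimal_generators_mod_m)
  have I: "ideal.subspace I" "fin_quot_dim (\<lambda>c a. phi c * a) I" "dim_ring_quot phi I = n"
    using \<open>colength phi I n\<close> unfolding colength_def ring_ideal_def by auto
  obtain N where N: "0 < N" "ideal_pow m N \<subseteq> I"
    using ideal_pow_subset_ideal_of_finite_colength[OF I(1,2)] .
  have gen_P: "lincomb_plus sm UNIV X (ideal_times_mod sm (ideal_pow m N)) = UNIV"
    by (rule M.lincomb_plus_ideal_pow[OF m_ideal gen_m])
  have "dim_tensor_quot phi sm (ideal_pow m N) = dim_ring_quot phi (ideal_pow m N) * card X"
    using H N(1) X(2) by simp
  then have "free_modulo sm (ideal_pow m N) X"
    using dim_tensor_quot_eq_iff_free_modulo[OF ideal_pow_ideal fin_quot_dim_ideal_pow X(1) gen_P]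
    by blast
  then have "free_modulo sm I X"
    by (rule M.free_modulo_mono[OF ideal_pow_ideal I(1) N(2) gen_P])
  moreover have "lincomb_plus sm UNIV X (ideal_times_mod sm I) = UNIV"
    using M.lincomb_plus_mono[OF order_refl M.ideal_times_mod_mono[OF N(2)], of UNIV X]
    unfolding gen_P by (simp add: top.extremum_unique)
  ultimately have "dim_tensor_quot phi sm I = dim_ring_quot phi I * card X"
    using dim_tensor_quot_eq_iff_free_modulo[OF I(1,2) X(1)] by blast
  then show ?thesis using I(3) X(2) by (simp add: mult.commute)
qed

end

theorem proposition4:
  fixes phi :: "'k::field \<Rightarrow> 'a::comm_ring_1"
    and m :: "'a set"
    and sm :: "'a \<Rightarrow> 'm::ab_group_add \<Rightarrow> 'm"
  assumes "algebraically_closed TYPE('k)"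
    and "ring_hom_fun phi"
    and "noetherian_ring TYPE('a)"
    and "local_ring_with_max m"
    and "residue_field_is phi m"
    and "module sm"
    and "finitely_generated_mod sm"
  shows "(\<forall>n::nat. n > 0 \<longrightarrow> (\<forall>I. colength phi I n \<longrightarrow>
            dim_tensor_quot phi sm I = n * dim_tensor_quot phi sm m))
     \<longleftrightarrow> (\<forall>n::nat. n > 0 \<longrightarrow>
            dim_tensor_quot phi sm (ideal_pow m n)
              = dim_ring_quot phi (ideal_pow m n) * dim_tensor_quot phi sm m)"
proof -
  interpret local_k_algebra_module phi m sm
    using assms(2-7)
    by (intro local_k_algebra_module.intro local_k_algebra.intro local_k_algebra_axioms.intro
        k_algebra_module.intro k_algebra.intro local_k_algebra_module_axioms.intro)
  show ?thesis
  proof (intro iffI allI impI)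
    fix n :: nat
    assume H: "\<forall>n>0. \<forall>I. colength phi I n \<longrightarrow> dim_tensor_quot phi sm I = n * dim_tensor_quot phi sm m"
      and "0 < n"
    show "dim_tensor_quot phi sm (ideal_pow m n)
        = dim_ring_quot phi (ideal_pow m n) * dim_tensor_quot phi sm m"
      using H[rule_format, OF dim_ring_quot_ideal_pow_pos[OF \<open>0 < n\<close>] colength_ideal_pow] .
  next
    fix n I
    assume "\<forall>n>0. dim_tensor_quot phi sm (ideal_pow m n)
        = dim_ring_quot phi (ideal_pow m n) * dim_tensor_quot phi sm m"
      and "colength phi I n"
    then show "dim_tensor_quot phi sm I = n * dim_tensor_quot phi sm m"
      by (rule dim_tensor_quot_of_colength)
  qed
qed

end
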